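(* For every $\pi\in S_n$, $\mathrm{inv}(\pi)\equiv\mathrm{inv}(dp(\pi))\pmod 2$.
   Context: $S_n$ is the symmetric group on $[n]$, $\mathrm{inv}(\pi)=\#\{(i,j):i<j,\pi_i>\pi_j\}$ (with $\mathrm{inv}$ of the empty word equal to $0$). For a word $w$ of distinct positive integers $a_1<\dots<a_m$, its reduction is obtained by replacing each $a_j$ by $j$. The derangement part $dp(\pi)$ is the reduction of the subword of $\pi$ consisting of the letters $\pi_i$ with $\pi_i\ne i$. *)

theory Defs
  imports "HOL-Combinatorics.Permutations"
begin

definition inv_word :: "nat list \<Rightarrow> nat" where
  "inv_word w = card {(i, j). i < j \<and> j < length w \<and> w ! i > w ! j}"

text \<open>Reduction of a word of distinct positive integers: replace each letter by its rank
  (the j-th smallest letter becomes j).\<close>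
definition reduction :: "nat list \<Rightarrow> nat list" where
  "reduction w = map (\<lambda>a. card {b \<in> set w. b \<le> a}) w"

definition one_line :: "nat \<Rightarrow> (nat \<Rightarrow> nat) \<Rightarrow> nat list" where
  "one_line n \<pi> = map \<pi> [1..<n+1]"

text \<open>Derangement part: reduction of the subword of non-fixed letters.\<close>
definition dp :: "nat \<Rightarrow> (nat \<Rightarrow> nat) \<Rightarrow> nat list" where
  "dp n \<pi> = reduction (map \<pi> (filter (\<lambda>i. \<pi> i \<noteq> i) [1..<n+1]))"

end

theory Submission
  imports Defs
begin

text \<open>
  Both inversion numbers count inversions of \<pi> itself: on all of {1..n}, and on the
  non-fixed points (the reduction only relabels letters order-preservingly). An inversion
  involving a fixed point k either has a letter b < k with \<pi> b > k or a letter b > k with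
  \<pi> b < k, and these two kinds are equinumerous because \<pi> maps {b. \<pi> b < k} onto
  {b. b < k}. So every fixed point contributes an even number of inversions.
\<close>

definition inversions_on :: "('a::ord \<Rightarrow> 'b::ord) \<Rightarrow> 'a set \<Rightarrow> ('a \<times> 'a) set" where
  "inversions_on f X = {(a, b). a \<in> X \<and> b \<in> X \<and> a < b \<and> f b < f a}"

lemma inv_word_eq_card_inversions_on:
  "inv_word w = card (inversions_on (nth w) {..<length w})"
  unfolding inv_word_def inversions_on_def
  by (rule arg_cong[where f = card]) auto

lemma inversions_on_cong:
  "(\<And>x. x \<in> X \<Longrightarrow> f x = g x) \<Longrightarrow> inversions_on f X = inversions_on g X"
  by (auto simp: inversions_on_def)

lemma finite_inversions_on: "finite X \<Longrightarrow> finite (inversions_on f X)"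
  by (rule finite_subset[of _ "X \<times> X"]) (auto simp: inversions_on_def)

lemma inversions_on_strict_mono_comp:
  fixes f :: "'a::ord \<Rightarrow> 'b::linorder" and g :: "'b \<Rightarrow> 'c::linorder"
  assumes "strict_mono_on (f ` X) g"
  shows "inversions_on (g \<circ> f) X = inversions_on f X"
  using strict_mono_on_less[OF assms] by (auto simp: inversions_on_def)

lemma card_inversions_on_comp_strict_mono:
  fixes h :: "'a::linorder \<Rightarrow> 'b::linorder" and f :: "'b \<Rightarrow> 'c::ord"
  assumes "strict_mono_on X h"
  shows "card (inversions_on (f \<circ> h) X) = card (inversions_on f (h ` X))"
proof -
  have "inj_on (map_prod h h) (X \<times> X)"
    using strict_mono_on_imp_inj_on[OF assms] by (auto simp: inj_on_def)
  then have "inj_on (map_prod h h) (inversions_on (f \<circ> h) X)"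
    by (rule inj_on_subset) (auto simp: inversions_on_def)
  moreover have "map_prod h h ` inversions_on (f \<circ> h) X = inversions_on f (h ` X)"
    using strict_mono_on_less[OF assms] by (fastforce simp: inversions_on_def)
  ultimately show ?thesis
    by (metis card_image)
qed

lemma strict_mono_on_nth:
  "sorted_wrt (<) xs \<Longrightarrow> strict_mono_on {..<length xs} (nth xs)"
  by (rule strict_mono_onI) (auto simp: sorted_wrt_iff_nth_less)

lemma inv_word_map_sorted:
  fixes xs :: "'a::linorder list"
  assumes "sorted_wrt (<) xs"
  shows "inv_word (map f xs) = card (inversions_on f (set xs))"
proof -
  have "inversions_on (nth (map f xs)) {..<length xs} = inversions_on (f \<circ> nth xs) {..<length xs}"
    by (rule inversions_on_cong) simp
  then have "inv_word (map f xs) = card (inversions_on (f \<circ> nth xs) {..<length xs})"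
    by (simp add: inv_word_eq_card_inversions_on)
  also have "\<dots> = card (inversions_on f (nth xs ` {..<length xs}))"
    using strict_mono_on_nth[OF assms] by (rule card_inversions_on_comp_strict_mono)
  also have "nth xs ` {..<length xs} = set xs"
    by (auto simp: in_set_conv_nth)
  finally show ?thesis .
qed

lemma strict_mono_on_rank:
  fixes X :: "'a::linorder set"
  assumes "finite X"
  shows "strict_mono_on X (\<lambda>a. card {b \<in> X. b \<le> a})"
proof (rule strict_mono_onI)
  fix a c assume "a \<in> X" "c \<in> X" "a < c"
  then have "{b \<in> X. b \<le> a} \<subset> {b \<in> X. b \<le> c}"
    by (auto simp: psubset_eq Set.set_eq_iff intro!: exI[of _ c])
  then show "card {b \<in> X. b \<le> a} < card {b \<in> X. b \<le> c}"
    using assms by (simp add: psubset_card_mono)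
qed

lemma inv_word_reduction: "inv_word (reduction w) = inv_word w"
proof -
  let ?rank = "\<lambda>a. card {b \<in> set w. b \<le> a}"
  have "inversions_on (nth (reduction w)) {..<length w} = inversions_on (?rank \<circ> nth w) {..<length w}"
    by (rule inversions_on_cong) (simp add: reduction_def)
  also have "\<dots> = inversions_on (nth w) {..<length w}"
  proof (rule inversions_on_strict_mono_comp)
    have "nth w ` {..<length w} = set w"
      by (auto simp: in_set_conv_nth)
    then show "strict_mono_on (nth w ` {..<length w}) ?rank"
      using strict_mono_on_rank[of "set w"] by simp
  qed
  finally show ?thesis
    by (simp add: inv_word_eq_card_inversions_on reduction_def)
qed

lemma card_crossing_fixed_point:
  fixes \<pi> :: "'a::linorder \<Rightarrow> 'a"
  assumes perm: "\<pi> permutes S" and "finite S" and fixed: "\<pi> k = k"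
  shows "card {b \<in> S. b < k \<and> k < \<pi> b} = card {b \<in> S. k < b \<and> \<pi> b < k}"
proof -
  let ?L = "{b \<in> S. b < k}" and ?P = "{b \<in> S. \<pi> b < k}"
  have inj: "inj_on \<pi> S"
    using perm permutes_inj_on by blast
  have "\<pi> ` ?P = ?L"
  proof
    show "\<pi> ` ?P \<subseteq> ?L"
      using permutes_in_image[OF perm] by auto
    show "?L \<subseteq> \<pi> ` ?P"
    proof
      fix c assume "c \<in> ?L"
      moreover have "inv \<pi> c \<in> S"
        using \<open>c \<in> ?L\<close> permutes_in_image[OF permutes_inv[OF perm]] by blast
      ultimately show "c \<in> \<pi> ` ?P"
        using permutes_inverses(1)[OF perm] by (metis (mono_tags, lifting) image_eqI mem_Collect_eq)
    qed
  qed
  then have "card ?P = card ?L"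
    using inj by (metis (no_types, lifting) card_image inj_on_subset mem_Collect_eq subsetI)
  moreover have "\<pi> b \<noteq> k" if "b \<noteq> k" for b
    using fixed that permutes_inj[OF perm] by (metis injD)
  then have "{b \<in> S. b < k \<and> k < \<pi> b} = ?L - ?P"
    by (fastforce simp: not_less le_less)
  moreover have "{b \<in> S. k < b \<and> \<pi> b < k} = ?P - ?L"
    using fixed by (auto simp: not_less le_less)
  ultimately show ?thesis
    using \<open>finite S\<close> by (simp add: card_Diff_subset_Int Int_commute)
qed

lemma card_inversions_on_fixed_points:
  fixes \<pi> :: "'a::linorder \<Rightarrow> 'a"
  assumes perm: "\<pi> permutes S" and fin: "finite S"
  defines "F \<equiv> {k \<in> S. \<pi> k = k}"
  shows "card (inversions_on \<pi> S) =
    card (inversions_on \<pi> {i \<in> S. \<pi> i \<noteq> i}) + 2 * (\<Sum>k\<in>F. card {b \<in> S. b < k \<and> k < \<pi> b})"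
proof -
  define A where "A k = {b \<in> S. b < k \<and> k < \<pi> b}" for k
  define B where "B k = {b \<in> S. k < b \<and> \<pi> b < k}" for k
  define E\<^sub>1 where "E\<^sub>1 = {(b, k) \<in> inversions_on \<pi> S. k \<in> F}"
  define E\<^sub>2 where "E\<^sub>2 = {(k, b) \<in> inversions_on \<pi> S. k \<in> F}"
  have finite_AB: "finite (A k)" "finite (B k)" for k
    using fin by (auto simp: A_def B_def)
  let ?D = "inversions_on \<pi> {i \<in> S. \<pi> i \<noteq> i}"
  have split: "inversions_on \<pi> S = ?D \<union> (E\<^sub>1 \<union> E\<^sub>2)"
    by (auto simp: inversions_on_def E\<^sub>1_def E\<^sub>2_def F_def)
  moreover have "finite (inversions_on \<pi> S)"
    using fin by (rule finite_inversions_on)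
  ultimately have "finite ?D" "finite E\<^sub>1" "finite E\<^sub>2"
    by (metis finite_Un)+
  moreover have "?D \<inter> (E\<^sub>1 \<union> E\<^sub>2) = {}" "E\<^sub>1 \<inter> E\<^sub>2 = {}"
    by (auto simp: inversions_on_def E\<^sub>1_def E\<^sub>2_def F_def)
  ultimately have "card (inversions_on \<pi> S) = card ?D + (card E\<^sub>1 + card E\<^sub>2)"
    by (subst split) (simp add: card_Un_disjoint)
  moreover have "E\<^sub>1 = prod.swap ` Sigma F A"
    by (auto simp: E\<^sub>1_def A_def F_def inversions_on_def image_iff)
  then have "card E\<^sub>1 = (\<Sum>k\<in>F. card (A k))"
    using fin finite_AB by (simp add: card_image card_SigmaI F_def)
  moreover have "E\<^sub>2 = Sigma F B"
    by (auto simp: E\<^sub>2_def B_def F_def inversions_on_def)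
  then have "card E\<^sub>2 = (\<Sum>k\<in>F. card (B k))"
    using fin finite_AB by (simp add: card_SigmaI F_def)
  moreover have "(\<Sum>k\<in>F. card (B k)) = (\<Sum>k\<in>F. card (A k))"
    using card_crossing_fixed_point[OF perm fin] by (simp add: A_def B_def F_def)
  ultimately show ?thesis
    by (simp add: A_def)
qed

corollary even_card_inversions_on_iff_nonfixed:
  fixes \<pi> :: "'a::linorder \<Rightarrow> 'a"
  assumes "\<pi> permutes S" and "finite S"
  shows "even (card (inversions_on \<pi> S)) \<longleftrightarrow> even (card (inversions_on \<pi> {i \<in> S. \<pi> i \<noteq> i}))"
  by (simp add: card_inversions_on_fixed_points[OF assms])

theorem mainTheorem6:
  fixes n :: nat and \<pi> :: "nat \<Rightarrow> nat"
  assumes "\<pi> permutes {1..n}"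
  shows "even (inv_word (one_line n \<pi>)) \<longleftrightarrow> even (inv_word (dp n \<pi>))"
proof -
  have sorted: "sorted_wrt (<) [1..<n+1]"
    by (rule sorted_wrt_upt)
  have "set [1..<n+1] = {1..n}" "set (filter (\<lambda>i. \<pi> i \<noteq> i) [1..<n+1]) = {i \<in> {1..n}. \<pi> i \<noteq> i}"
    by auto
  then have "inv_word (one_line n \<pi>) = card (inversions_on \<pi> {1..n})"
    and "inv_word (dp n \<pi>) = card (inversions_on \<pi> {i \<in> {1..n}. \<pi> i \<noteq> i})"
    by (simp_all only: one_line_def dp_def inv_word_reduction
        inv_word_map_sorted[OF sorted] inv_word_map_sorted[OF sorted_wrt_filter[OF sorted]])
  with assms show ?thesis
    by (simp only: even_card_inversions_on_iff_nonfixed finite_atLeastAtMost)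
qed

end
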